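(* $\mathrm{EquSLP}\leq_{\mathrm{P}}\mathrm{2SoSSLP}$ (polynomial-time many-one reduction).
   Context: A (division-free, constant-free) SLP computing an integer is a sequence $(b_0,\dots,b_m)$ of integers with $b_0=1$ and $b_i=b_j\circ_i b_k$ for some $j,k<i$, $\circ_i\in\{+,-,\times\}$; it computes $b_m$. $\mathrm{EquSLP}$: given an SLP computing $N\in\mathbb{Z}$, decide whether $N=0$. $\mathrm{2SoSSLP}$: given an SLP computing $N\in\mathbb{Z}$, decide whether $N=a^2+b^2$ for some integers $a,b$. *)

theory Defs
  imports Main
begin

datatype op = Add | Sub | Mul

text \<open>Instruction (oo, j, k) defines the next value b_i = b_j o b_k.\<close>
type_synonym slp = "(op \<times> nat \<times> nat) list"

fun apply_op :: "op \<Rightarrow> int \<Rightarrow> int \<Rightarrow> int" where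
  "apply_op Add x y = x + y"
| "apply_op Sub x y = x - y"
| "apply_op Mul x y = x * y"

definition slp_vals :: "slp \<Rightarrow> int list" where
  "slp_vals P = foldl (\<lambda>bs (oo, j, k). bs @ [apply_op oo (bs ! j) (bs ! k)]) [1] P"

text \<open>Well-formedness: the i-th instruction (0-based) defines b_(i+1) and may only
  refer to b_j, b_k with j, k < i+1.\<close>
definition slp_valid :: "slp \<Rightarrow> bool" where
  "slp_valid P \<longleftrightarrow> (\<forall>i<length P. fst (snd (P ! i)) \<le> i \<and> snd (snd (P ! i)) \<le> i)"

definition slp_value :: "slp \<Rightarrow> int" where
  "slp_value P = last (slp_vals P)"

text \<open>Binary, most significant bit first, digit 0 as symbol 1, digit 1 as symbol 2.\<close>
fun bin :: "nat \<Rightarrow> nat list" where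
  "bin n = (if n < 2 then [n + 1] else bin (n div 2) @ [n mod 2 + 1])"

fun op_sym :: "op \<Rightarrow> nat" where
  "op_sym Add = 4" | "op_sym Sub = 5" | "op_sym Mul = 6"

definition enc_instr :: "op \<times> nat \<times> nat \<Rightarrow> nat list" where
  "enc_instr x = (case x of (oo, j, k) \<Rightarrow> [op_sym oo] @ bin j @ [3] @ bin k @ [3])"

definition enc_slp :: "slp \<Rightarrow> nat list" where
  "enc_slp P = concat (map enc_instr P)"

definition sigma :: "nat set" where
  "sigma = {1..6}"

definition words :: "nat list set" where
  "words = {w. set w \<subseteq> sigma}"

definition EquSLP :: "nat list set" where
  "EquSLP = {w. \<exists>P. slp_valid P \<and> w = enc_slp P \<and> slp_value P = 0}"

definition sum_two_squares :: "int \<Rightarrow> bool" where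
  "sum_two_squares N \<longleftrightarrow> (\<exists>a b :: int. N = a^2 + b^2)"

definition TwoSoSSLP :: "nat list set" where
  "TwoSoSSLP = {w. \<exists>P. slp_valid P \<and> w = enc_slp P \<and> sum_two_squares (slp_value P)}"

datatype dir = Lft | Rgt | Stay

text \<open>States 0..<tm_states, start state 0, halting state 1; tape symbols 0..<tm_syms,
  0 the blank; the tape is indexed by the integers.\<close>
record tm =
  tm_states :: nat
  tm_syms :: nat
  tm_delta :: "nat \<Rightarrow> nat \<Rightarrow> nat \<times> nat \<times> dir"

definition tm_wf :: "tm \<Rightarrow> bool" where
  "tm_wf M \<longleftrightarrow> 2 \<le> tm_states M \<and> 6 < tm_syms M \<and>
     (\<forall>q<tm_states M. \<forall>a<tm_syms M.
        fst (tm_delta M q a) < tm_states M \<and> fst (snd (tm_delta M q a)) < tm_syms M)"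

type_synonym config = "nat \<times> (int \<Rightarrow> nat) \<times> int"

fun move :: "dir \<Rightarrow> int" where
  "move Lft = -1" | "move Rgt = 1" | "move Stay = 0"

fun tm_step :: "tm \<Rightarrow> config \<Rightarrow> config" where
  "tm_step M (q, tp, h) =
     (if q = 1 then (q, tp, h)
      else (case tm_delta M q (tp h) of (q', a, d) \<Rightarrow> (q', tp(h := a), h + move d)))"

definition tm_init :: "nat list \<Rightarrow> config" where
  "tm_init w = (0, \<lambda>i. if 0 \<le> i \<and> i < int (length w) then w ! nat i else 0, 0)"

definition tm_run :: "tm \<Rightarrow> nat \<Rightarrow> nat list \<Rightarrow> config" where
  "tm_run M n w = (tm_step M ^^ n) (tm_init w)"

definition tape_reads :: "(int \<Rightarrow> nat) \<Rightarrow> int \<Rightarrow> nat list \<Rightarrow> bool" where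
  "tape_reads tp h ys \<longleftrightarrow> (\<forall>i<length ys. tp (h + int i) = ys ! i \<and> ys ! i \<noteq> 0)
                         \<and> tp (h + int (length ys)) = 0"

definition computes_within :: "tm \<Rightarrow> nat list \<Rightarrow> nat list \<Rightarrow> nat \<Rightarrow> bool" where
  "computes_within M w ys t \<longleftrightarrow>
     (\<exists>n\<le>t. fst (tm_run M n w) = 1 \<and>
            tape_reads (fst (snd (tm_run M n w))) (snd (snd (tm_run M n w))) ys)"

definition poly_reduces :: "nat list set \<Rightarrow> nat list set \<Rightarrow> bool" where
  "poly_reduces L1 L2 \<longleftrightarrow>
     (\<exists>(f :: nat list \<Rightarrow> nat list) M (c :: nat) (d :: nat). tm_wf M \<and>
        (\<forall>w\<in>words. computes_within M w (f w) (c * (length w + 1) ^ d)) \<and>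
        (\<forall>w\<in>words. w \<in> L1 \<longleftrightarrow> f w \<in> L2))"

end

theory Submission
  imports Defs
begin

(* Append to a program with m instructions that computes N = b_m the instructions
   b_(m+1) = b_0 - b_0, b_(m+2) = b_m * b_m and b_(m+3) = b_(m+1) - b_(m+2). The new program
   computes -N^2, which is a sum of two squares iff N = 0. On codes this is w |-> w @ c(m), where m
   is the number of operation symbols in w; since operation symbols only start instructions, the
   result is a code only if w is the code of a program with m instructions.
   The suffix c(m) consists of fixed separators and the binary numerals of m, m, m + 1 and m + 2.
   A Turing machine writes it in passes over w: each pass counts the operation symbols of w into
   the binary counter at the right end (marking a symbol, running right, incrementing, returning to
   the mark) and then appends the next separator and a counter initialised to 0, 0, 1 or 2. The
   tape has length O(|w|), so this takes O(|w|^2) steps. *)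

declare bin.simps [simp del]

lemma bin_less_2: "n < 2 \<Longrightarrow> bin n = [n + 1]"
  by (subst bin.simps) simp

lemma bin_ge_2: "2 \<le> n \<Longrightarrow> bin n = bin (n div 2) @ [n mod 2 + 1]"
  by (subst bin.simps) simp

lemma bin_small: "bin 0 = [1]" "bin 1 = [2]" "bin 2 = [2, 1]"
  by (simp_all add: bin_less_2 bin_ge_2)

lemma set_bin: "set (bin n) \<subseteq> {1, 2}"
proof (induction n rule: bin.induct)
  case (1 n)
  then show ?case
    by (cases "n < 2") (auto simp: bin_less_2 bin_ge_2)
qed

lemma bin_not_Nil: "bin n \<noteq> []"
  by (cases "n < 2") (simp_all add: bin_less_2 bin_ge_2)

lemma inj_bin: "inj bin"
proof -
  define unbin :: "nat list \<Rightarrow> nat" where "unbin = foldl (\<lambda>acc d. 2 * acc + (d - 1)) 0"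
  have "unbin (bin n) = n" for n
  proof (induction n rule: bin.induct)
    case (1 n)
    then show ?case
      by (cases "n < 2") (auto simp: bin_less_2 bin_ge_2 unbin_def)
  qed
  then show ?thesis
    by (metis injI)
qed

lemma length_bin_le: "length (bin n) \<le> n + 1"
proof (induction n rule: bin.induct)
  case (1 n)
  then show ?case
    by (cases "n < 2") (auto simp: bin_less_2 bin_ge_2)
qed

lemma bin_Suc_cases:
  "(\<exists>pr k. bin c = pr @ 1 # replicate k 2 \<and> bin (c + 1) = pr @ 2 # replicate k 1) \<or>
   (\<exists>k. bin c = replicate (Suc k) 2 \<and> bin (c + 1) = 2 # replicate (Suc k) 1)"
proof (induction c rule: less_induct)
  case (less c)
  consider "c = 0" | "c = 1" | "2 \<le> c" "even c" | "2 \<le> c" "odd c"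
    by linarith
  then show ?case
  proof cases
    case 1
    then show ?thesis using bin_small by (intro disjI1 exI[of _ "[]"] exI[of _ 0]) simp
  next
    case 2
    then show ?thesis using bin_small by (intro disjI2 exI[of _ 0]) (simp add: numeral_2_eq_2)
  next
    case 3
    then have "bin c = bin (c div 2) @ [1]" "bin (c + 1) = bin (c div 2) @ [2]"
      using bin_ge_2[of c] bin_ge_2[of "c + 1"] by (auto elim: evenE)
    then show ?thesis by (intro disjI1 exI[of _ "bin (c div 2)"] exI[of _ 0]) simp
  next
    case 4
    then have bin_c: "bin c = bin (c div 2) @ [2]" "bin (c + 1) = bin (c div 2 + 1) @ [1]"
      using bin_ge_2[of c] bin_ge_2[of "c + 1"] by (auto elim!: oddE)
    from 4 have "c div 2 < c" by simp
    from less[OF this] show ?thesis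
    proof (elim disjE exE conjE)
      fix pr k
      assume "bin (c div 2) = pr @ 1 # replicate k 2" "bin (c div 2 + 1) = pr @ 2 # replicate k 1"
      with bin_c show ?thesis
        by (intro disjI1 exI[of _ pr] exI[of _ "Suc k"]) (simp add: replicate_append_same)
    next
      fix k
      assume "bin (c div 2) = replicate (Suc k) 2" "bin (c div 2 + 1) = 2 # replicate (Suc k) 1"
      with bin_c show ?thesis
        by (intro disjI2 exI[of _ "Suc k"]) (simp add: replicate_append_same del: replicate_Suc,
            simp add: replicate_append_same)
    qed
  qed
qed

lemma length_bin_mono: "c \<le> c' \<Longrightarrow> length (bin c) \<le> length (bin c')"
proof (induction c' rule: dec_induct)
  case (step n)
  then show ?case using bin_Suc_cases[of n] by auto
qed simp

lemma enc_instr_Cons: "enc_instr (oo, j, k) = op_sym oo # bin j @ 3 # bin k @ [3]"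
  by (simp add: enc_instr_def)

lemma op_sym_range: "op_sym oo \<in> {4, 5, 6}"
  by (cases oo) auto

lemma inj_op_sym: "inj op_sym"
proof (rule injI)
  show "op_sym a = op_sym b \<Longrightarrow> a = b" for a b
    by (cases a; cases b) simp_all
qed

lemma digits_append_sep_eq:
  fixes u u' :: "nat list"
  assumes "set u \<subseteq> {1, 2}" "set u' \<subseteq> {1, 2}" "u @ 3 # r = u' @ 3 # r'"
  shows "u = u' \<and> r = r'"
  using assms
proof (induction u arbitrary: u')
  case Nil
  then show ?case by (cases u') auto
next
  case (Cons a u)
  then show ?case by (cases u') auto
qed

lemma enc_instr_append_eq:
  assumes "enc_instr x @ r = enc_instr y @ r'"
  shows "x = y \<and> r = r'"
proof -
  obtain o1 j1 k1 o2 j2 k2 where xy: "x = (o1, j1, k1)" "y = (o2, j2, k2)"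
    by (cases x, cases y) auto
  with assms have "op_sym o1 = op_sym o2"
    and "bin j1 @ 3 # (bin k1 @ 3 # r) = bin j2 @ 3 # (bin k2 @ 3 # r')"
    by (simp_all add: enc_instr_Cons)
  then have "o1 = o2" "bin j1 = bin j2" "bin k1 = bin k2" "r = r'"
    using digits_append_sep_eq[OF set_bin set_bin] inj_op_sym by (blast dest: injD)+
  then show ?thesis
    using inj_bin by (auto simp: xy dest: injD)
qed

lemma enc_slp_Nil [simp]: "enc_slp [] = []"
  and enc_slp_Cons [simp]: "enc_slp (x # P) = enc_instr x @ enc_slp P"
  and enc_slp_append: "enc_slp (P @ Q) = enc_slp P @ enc_slp Q"
  by (simp_all add: enc_slp_def)

lemma enc_instr_not_Nil: "enc_instr x \<noteq> []"
  by (cases x) (simp add: enc_instr_Cons)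

lemma inj_enc_slp: "inj enc_slp"
proof (rule injI)
  show "enc_slp P = enc_slp Q \<Longrightarrow> P = Q" for P Q
  proof (induction P arbitrary: Q)
    case Nil
    then show ?case by (cases Q) (auto simp: enc_instr_not_Nil)
  next
    case (Cons x P)
    then show ?case
      by (cases Q) (auto simp: enc_instr_not_Nil dest: enc_instr_append_eq)
  qed
qed

lemma enc_instr_eq_op_sym_Cons:
  "\<exists>t. enc_instr x = op_sym (fst x) # t \<and> set t \<subseteq> {1, 2, 3}"
  using set_bin by (cases x) (fastforce simp: enc_instr_Cons)

(* Operation symbols occur in a code only at the start of an instruction, so a code cannot be
   cut inside an instruction leaving a nonempty code. *)
lemma enc_slp_eq_append_enc_slp:
  "enc_slp Q = w @ enc_slp G \<Longrightarrow> \<exists>P. Q = P @ G \<and> w = enc_slp P"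
proof (induction Q arbitrary: w)
  case Nil
  then have "w = []" "enc_slp G = enc_slp []" by simp_all
  then show ?case using inj_enc_slp[THEN injD] by fastforce
next
  case (Cons x Q)
  from Cons.prems obtain us where
    "enc_instr x = w @ us \<and> us @ enc_slp Q = enc_slp G \<or>
     enc_instr x @ us = w \<and> enc_slp Q = us @ enc_slp G"
    by (auto simp: append_eq_append_conv2)
  then show ?case
  proof (elim disjE conjE)
    assume inside: "enc_instr x = w @ us" and rest: "us @ enc_slp Q = enc_slp G"
    consider "w = []" | "us = []" | "w \<noteq> []" "us \<noteq> []" by blast
    then show ?thesis
    proof cases
      case 1
      then have "enc_slp (x # Q) = enc_slp G" using Cons.prems by simp
      then have "x # Q = G" by (rule inj_enc_slp[THEN injD])
      with 1 show ?thesis by auto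
    next
      case 2
      then have "Q = G" using rest inj_enc_slp by (auto dest: injD)
      with 2 inside show ?thesis by (intro exI[of _ "[x]"]) simp
    next
      case 3
      obtain t where t: "enc_instr x = op_sym (fst x) # t" "set t \<subseteq> {1, 2, 3}"
        using enc_instr_eq_op_sym_Cons by blast
      from 3 inside t have "hd us \<in> {1, 2, 3}" by (cases w) (auto dest!: hd_in_set)
      moreover from 3 rest obtain y G' where G: "G = y # G'" by (cases G) auto
      obtain t' where "enc_instr y = op_sym (fst y) # t'"
        using enc_instr_eq_op_sym_Cons by blast
      with 3 rest G have "hd us = op_sym (fst y)" by (cases us) auto
      ultimately show ?thesis using op_sym_range[of "fst y"] by auto
    qed
  next
    assume "enc_instr x @ us = w" "enc_slp Q = us @ enc_slp G"
    moreover obtain P where "Q = P @ G" "us = enc_slp P"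
      using Cons.IH \<open>enc_slp Q = us @ enc_slp G\<close> by blast
    ultimately show ?thesis by (intro exI[of _ "x # P"]) simp
  qed
qed

section \<open>The reduction\<close>

definition count_ops :: "nat list \<Rightarrow> nat" where
  "count_ops w = length (filter (\<lambda>a. a \<in> {4, 5, 6}) w)"

lemma count_ops_append: "count_ops (u @ v) = count_ops u + count_ops v"
  by (simp add: count_ops_def)

lemma count_ops_enc_slp: "count_ops (enc_slp P) = length P"
proof (induction P)
  case (Cons x P)
  obtain t where "enc_instr x = op_sym (fst x) # t" "set t \<subseteq> {1, 2, 3}"
    using enc_instr_eq_op_sym_Cons by blast
  then have "count_ops (enc_instr x) = 1"
    using op_sym_range[of "fst x"] by (auto simp: count_ops_def filter_empty_conv)
  with Cons show ?case by (simp add: count_ops_append)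
qed (simp add: count_ops_def)

lemma set_enc_slp: "set (enc_slp P) \<subseteq> {1..6}"
proof (induction P)
  case (Cons x P)
  obtain t where "enc_instr x = op_sym (fst x) # t" "set t \<subseteq> {1, 2, 3}"
    using enc_instr_eq_op_sym_Cons by blast
  with Cons show ?case
    using op_sym_range[of "fst x"] by auto
qed simp

lemma count_ops_le_length: "count_ops w \<le> length w"
  by (simp add: count_ops_def)

definition neg_square_instrs :: "nat \<Rightarrow> slp" where
  "neg_square_instrs m = [(Sub, 0, 0), (Mul, m, m), (Sub, m + 1, m + 2)]"

definition reduction :: "nat list \<Rightarrow> nat list" where
  "reduction w = w @ enc_slp (neg_square_instrs (count_ops w))"

lemma slp_vals_Nil: "slp_vals [] = [1]"
  by (simp add: slp_vals_def)

lemma slp_vals_snoc: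
  "slp_vals (P @ [(oo, j, k)]) = slp_vals P @ [apply_op oo (slp_vals P ! j) (slp_vals P ! k)]"
  by (simp add: slp_vals_def)

lemma length_slp_vals: "length (slp_vals P) = length P + 1"
  by (induction P rule: rev_induct) (auto simp: slp_vals_Nil slp_vals_snoc)

lemma slp_vals_nth_0: "slp_vals P ! 0 = 1"
  by (induction P rule: rev_induct) (auto simp: slp_vals_Nil slp_vals_snoc nth_append length_slp_vals)

lemma slp_value_conv_nth: "slp_value P = slp_vals P ! length P"
proof -
  have "slp_vals P \<noteq> []"
    using length_slp_vals[of P] by auto
  then show ?thesis
    using length_slp_vals[of P] by (simp add: slp_value_def last_conv_nth)
qed

lemma slp_value_neg_square: "slp_value (P @ neg_square_instrs (length P)) = - (slp_value P ^ 2)"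
proof -
  let ?N = "slp_value P"
  have "slp_vals (P @ neg_square_instrs (length P))
      = slp_vals (((P @ [(Sub, 0, 0)]) @ [(Mul, length P, length P)]) @ [(Sub, length P + 1, length P + 2)])"
    by (simp add: neg_square_instrs_def)
  also have "\<dots> = slp_vals P @ [0, ?N * ?N, - (?N * ?N)]"
    by (simp add: slp_vals_snoc nth_append length_slp_vals slp_vals_nth_0 slp_value_conv_nth
        del: append_assoc)
  finally show ?thesis
    by (simp add: slp_value_def power2_eq_square)
qed

lemma slp_valid_append:
  "slp_valid (P @ Q) \<longleftrightarrow> slp_valid P \<and>
     (\<forall>j<length Q. fst (snd (Q ! j)) \<le> length P + j \<and> snd (snd (Q ! j)) \<le> length P + j)"
  unfolding slp_valid_def
proof safe
  fix i j
  assume H: "\<forall>i<length (P @ Q). fst (snd ((P @ Q) ! i)) \<le> i \<and> snd (snd ((P @ Q) ! i)) \<le> i"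
  show "fst (snd (P ! i)) \<le> i" "snd (snd (P ! i)) \<le> i" if "i < length P"
    using H[rule_format, of i] that by (simp_all add: nth_append)
  show "fst (snd (Q ! j)) \<le> length P + j" "snd (snd (Q ! j)) \<le> length P + j" if "j < length Q"
    using H[rule_format, of "length P + j"] that by (simp_all add: nth_append)
next
  fix i
  assume "\<forall>i<length P. fst (snd (P ! i)) \<le> i \<and> snd (snd (P ! i)) \<le> i"
    and "\<forall>j<length Q. fst (snd (Q ! j)) \<le> length P + j \<and> snd (snd (Q ! j)) \<le> length P + j"
    and "i < length (P @ Q)"
  then show "fst (snd ((P @ Q) ! i)) \<le> i" "snd (snd ((P @ Q) ! i)) \<le> i"
    by (cases "i < length P"; force simp: nth_append dest: spec[of _ "i - length P"])+
qed

lemma slp_valid_append_neg_square: "slp_valid (P @ neg_square_instrs (length P)) \<longleftrightarrow> slp_valid P"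
  by (auto simp: slp_valid_append neg_square_instrs_def numeral_3_eq_3 less_Suc_eq)

lemma sum_two_squares_neg_square: "sum_two_squares (- (N ^ 2)) \<longleftrightarrow> N = 0"
proof
  assume "sum_two_squares (- (N ^ 2))"
  then obtain a b where "- (N ^ 2) = a ^ 2 + b ^ 2"
    by (auto simp: sum_two_squares_def)
  then have "N ^ 2 \<le> 0"
    by (smt (verit) zero_le_power2)
  then show "N = 0" by simp
next
  assume "N = 0"
  then show "sum_two_squares (- (N ^ 2))"
    unfolding sum_two_squares_def by (intro exI[of _ 0]) simp
qed

theorem reduction_correct: "w \<in> EquSLP \<longleftrightarrow> reduction w \<in> TwoSoSSLP"
proof
  assume "w \<in> EquSLP"
  then obtain P where P: "slp_valid P" "w = enc_slp P" "slp_value P = 0"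
    by (auto simp: EquSLP_def)
  moreover have "reduction w = enc_slp (P @ neg_square_instrs (length P))"
    using P by (simp add: reduction_def count_ops_enc_slp enc_slp_append)
  moreover have "sum_two_squares (slp_value (P @ neg_square_instrs (length P)))"
    using P sum_two_squares_neg_square[of 0] by (simp add: slp_value_neg_square)
  ultimately show "reduction w \<in> TwoSoSSLP"
    unfolding TwoSoSSLP_def using slp_valid_append_neg_square[of P] by blast
next
  assume "reduction w \<in> TwoSoSSLP"
  then obtain Q where Q: "slp_valid Q" "enc_slp Q = w @ enc_slp (neg_square_instrs (count_ops w))"
      "sum_two_squares (slp_value Q)"
    by (auto simp: TwoSoSSLP_def reduction_def)
  then obtain P where P: "Q = P @ neg_square_instrs (count_ops w)" "w = enc_slp P"
    using enc_slp_eq_append_enc_slp by blast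
  then have "count_ops w = length P"
    by (simp add: count_ops_enc_slp)
  with P Q show "w \<in> EquSLP"
    by (auto simp: EquSLP_def slp_valid_append_neg_square slp_value_neg_square
        sum_two_squares_neg_square)
qed

section \<open>Runs of Turing machines\<close>

definition tape_of :: "nat list \<Rightarrow> int \<Rightarrow> nat" where
  "tape_of xs i = (if 0 \<le> i \<and> i < int (length xs) then xs ! nat i else 0)"

lemma tm_init_eq: "tm_init w = (0, tape_of w, 0)"
  by (simp add: tm_init_def tape_of_def [abs_def])

lemma tape_of_at: "tape_of (A @ x # C) (int (length A)) = x"
  by (simp add: tape_of_def nth_append)

lemma tape_of_update: "(tape_of (A @ x # C)) (int (length A) := y) = tape_of (A @ y # C)"
  by (rule ext) (auto simp: tape_of_def nth_append nth_Cons' nat_diff_distrib)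

lemma tape_of_outside: "i < 0 \<or> int (length A) \<le> i \<Longrightarrow> tape_of A i = 0"
  by (auto simp: tape_of_def)

lemma tape_of_snoc: "(tape_of A) (int (length A) := y) = tape_of (A @ [y])"
  by (rule ext) (auto simp: tape_of_def nth_append)

lemma tape_of_snoc_0: "tape_of (A @ [0]) = tape_of A"
  by (rule ext) (auto simp: tape_of_def nth_append)

definition reaches :: "tm \<Rightarrow> config \<Rightarrow> config \<Rightarrow> nat \<Rightarrow> bool" where
  "reaches M c c' t \<longleftrightarrow> (\<exists>s\<le>t. (tm_step M ^^ s) c = c')"

lemma reaches_refl: "reaches M c c 0"
  by (auto simp: reaches_def intro: exI[of _ 0])

lemma reaches_trans:
  assumes "reaches M c1 c2 t1" "reaches M c2 c3 t2"
  shows "reaches M c1 c3 (t1 + t2)"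
proof -
  obtain s1 s2 where "s1 \<le> t1" "(tm_step M ^^ s1) c1 = c2" "s2 \<le> t2" "(tm_step M ^^ s2) c2 = c3"
    using assms by (auto simp: reaches_def)
  then have "s2 + s1 \<le> t1 + t2" "(tm_step M ^^ (s2 + s1)) c1 = c3"
    by (simp_all add: funpow_add)
  then show ?thesis
    unfolding reaches_def by blast
qed

lemma reaches_mono: "reaches M c c' t \<Longrightarrow> t \<le> t' \<Longrightarrow> reaches M c c' t'"
  unfolding reaches_def using le_trans by blast

lemma reaches_step: "tm_step M c = c' \<Longrightarrow> reaches M c c' 1"
  by (auto simp: reaches_def intro: exI[of _ 1])

lemma computes_within_if_reaches:
  assumes "reaches M (tm_init w) (1, tape_of ys, 0) t" "0 \<notin> set ys"
  shows "computes_within M w ys t"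
proof -
  have "tape_reads (tape_of ys) 0 ys"
    using assms(2) by (auto simp: tape_reads_def tape_of_def) (metis gr0I nth_mem)
  with assms(1) show ?thesis
    by (auto simp: computes_within_def reaches_def tm_run_def)
qed

lemma step_at:
  "q \<noteq> 1 \<Longrightarrow> tm_delta M q x = (q', y, d) \<Longrightarrow>
    reaches M (q, tape_of (A @ x # C), int (length A)) (q', tape_of (A @ y # C), int (length A) + move d) 1"
  by (rule reaches_step) (simp add: tape_of_at tape_of_update)

lemma step_at_end:
  "q \<noteq> 1 \<Longrightarrow> tm_delta M q 0 = (q', y, d) \<Longrightarrow>
    reaches M (q, tape_of A, int (length A)) (q', tape_of (A @ [y]), int (length A) + move d) 1"
  by (rule reaches_step) (simp add: tape_of_outside tape_of_snoc)

lemma step_at_end_blank: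
  "q \<noteq> 1 \<Longrightarrow> tm_delta M q 0 = (q', 0, d) \<Longrightarrow>
    reaches M (q, tape_of A, int (length A)) (q', tape_of A, int (length A) + move d) 1"
  using step_at_end[of q M q' 0 d A] by (simp add: tape_of_snoc_0)

lemma step_before_start:
  "q \<noteq> 1 \<Longrightarrow> tm_delta M q 0 = (q', 0, d) \<Longrightarrow>
    reaches M (q, tape_of A, -1) (q', tape_of A, move d - 1) 1"
  by (rule reaches_step) (simp add: tape_of_outside fun_upd_idem)

lemma walk_right:
  assumes "q \<noteq> 1" "\<forall>a\<in>set B. tm_delta M q a = (q, g a, Rgt)"
  shows "reaches M (q, tape_of (A @ B @ C), int (length A))
           (q, tape_of (A @ map g B @ C), int (length A + length B)) (length B)"
  using assms(2)
proof (induction B arbitrary: A)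
  case Nil
  show ?case by (simp add: reaches_refl)
next
  case (Cons b B)
  have "reaches M (q, tape_of (A @ b # B @ C), int (length A))
      (q, tape_of ((A @ [g b]) @ B @ C), int (length (A @ [g b]))) 1"
    using step_at[OF assms(1), of M b q "g b" Rgt A "B @ C"] Cons.prems by (simp add: add.commute)
  moreover have "reaches M (q, tape_of ((A @ [g b]) @ B @ C), int (length (A @ [g b])))
      (q, tape_of ((A @ [g b]) @ map g B @ C), int (length (A @ [g b]) + length B)) (length B)"
    using Cons.IH[of "A @ [g b]"] Cons.prems by simp
  ultimately have "reaches M (q, tape_of (A @ (b # B) @ C), int (length A))
      (q, tape_of (A @ map g (b # B) @ C), int (length A + length (b # B))) (1 + length B)"
    by (auto dest: reaches_trans)
  then show ?case by simp
qed

lemma walk_left: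
  assumes "q \<noteq> 1" "\<forall>a\<in>set B. tm_delta M q a = (q, g a, Lft)"
  shows "reaches M (q, tape_of (A @ B @ C), int (length A + length B) - 1)
           (q, tape_of (A @ map g B @ C), int (length A) - 1) (length B)"
  using assms(2)
proof (induction B arbitrary: C rule: rev_induct)
  case Nil
  show ?case by (simp add: reaches_refl)
next
  case (snoc b B)
  have "reaches M (q, tape_of (A @ B @ b # C), int (length A + length B))
      (q, tape_of (A @ B @ g b # C), int (length A + length B) - 1) 1"
    using step_at[OF assms(1), of M b q "g b" Lft "A @ B" C] snoc.prems by simp
  moreover have "reaches M (q, tape_of (A @ B @ g b # C), int (length A + length B) - 1)
      (q, tape_of (A @ map g B @ g b # C), int (length A) - 1) (length B)"
    using snoc.IH[of "g b # C"] snoc.prems by simp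
  ultimately have "reaches M (q, tape_of (A @ (B @ [b]) @ C), int (length A + length (B @ [b])) - 1)
      (q, tape_of (A @ map g (B @ [b]) @ C), int (length A) - 1) (1 + length B)"
    by (auto dest: reaches_trans)
  then show ?case by simp
qed

section \<open>A Turing machine computing the reduction\<close>

(* Symbol 7 stands for the symbol 5 that starts the appended code; it marks the end of the input
   until the final return to the left end restores it. Symbols 8, 9, 10 are the marked operation
   symbols. Pass p uses the states 10 p + r, and write_st p i writes the i-th symbol of
   pass_suffix p; the start state 0 is to_end_st 0 and state 1 halts. *)

definition separator :: "nat \<Rightarrow> nat list" where
  "separator p = (if p = 1 then [7, 1, 3, 1, 3, 6] else if p = 3 then [3, 5] else [3])"

definition counter_init :: "nat \<Rightarrow> nat" where
  "counter_init p = (if p = 3 then 1 else if p = 4 then 2 else 0)"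

definition pass_counter :: "nat \<Rightarrow> nat list" where
  "pass_counter p = (if p = 5 then [] else bin (counter_init p))"

definition pass_suffix :: "nat \<Rightarrow> nat list" where
  "pass_suffix p = separator p @ pass_counter p"

(* The tape right of the input at the start of pass p, without the counter bin (counter_init p). *)
fun pass_prefix :: "nat \<Rightarrow> nat \<Rightarrow> nat list" where
  "pass_prefix 0 m = []"
| "pass_prefix (Suc 0) m = separator 1"
| "pass_prefix (Suc (Suc p)) m =
     pass_prefix (Suc p) m @ bin (counter_init (Suc p) + m) @ separator (Suc (Suc p))"

definition unmark_boundary :: "nat \<Rightarrow> nat \<Rightarrow> nat" where
  "unmark_boundary p a = (if p = 5 \<and> a = 7 then 5 else a)"

definition scan_st :: "nat \<Rightarrow> nat" where "scan_st p = 10 * p"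
definition seek_end_st :: "nat \<Rightarrow> nat" where "seek_end_st p = 10 * p + 1"
definition inc_st :: "nat \<Rightarrow> nat" where "inc_st p = 10 * p + 2"
definition carry_st :: "nat \<Rightarrow> nat" where "carry_st p = 10 * p + 3"
definition append_st :: "nat \<Rightarrow> nat" where "append_st p = 10 * p + 4"
definition return_st :: "nat \<Rightarrow> nat" where "return_st p = 10 * p + 5"
definition to_end_st :: "nat \<Rightarrow> nat" where "to_end_st p = (if p = 0 then 0 else 10 * p + 6)"
definition home_st :: "nat \<Rightarrow> nat" where "home_st p = 10 * p + 7"
definition write_st :: "nat \<Rightarrow> nat \<Rightarrow> nat" where "write_st p i = 100 + 10 * p + i"

definition home_exit :: "nat \<Rightarrow> nat" where
  "home_exit p = (if p = 5 then 1 else scan_st p)"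

definition pass_delta :: "nat \<Rightarrow> nat \<Rightarrow> nat \<Rightarrow> nat \<times> nat \<times> dir" where
  "pass_delta p r a =
     (if r = 0 then
        (if a = 7 then (to_end_st p, 7, Rgt)
         else if a \<in> {4, 5, 6} then (seek_end_st p, a + 4, Rgt)
         else (scan_st p, a, Rgt))
      else if r = 1 then (if a = 0 then (inc_st p, 0, Lft) else (seek_end_st p, a, Rgt))
      else if r = 2 then
        (if a = 2 then (inc_st p, 1, Lft)
         else if a = 1 then (return_st p, 2, Lft)
         else (carry_st p, a, Rgt))
      else if r = 3 then (append_st p, 2, Rgt)
      else if r = 4 then (if a = 0 then (return_st p, 1, Lft) else (append_st p, a, Rgt))
      else if r = 5 then
        (if a \<in> {8, 9, 10} then (scan_st p, a - 4, Rgt) else (return_st p, a, Lft))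
      else if r = 6 then
        (if a = 0 then (write_st (p + 1) 0, 0, Stay) else (to_end_st p, a, Rgt))
      else if r = 7 then
        (if a = 0 then (home_exit p, 0, Rgt) else (home_st p, unmark_boundary p a, Lft))
      else (1, 0, Stay))"

definition write_delta :: "nat \<Rightarrow> nat \<Rightarrow> nat \<times> nat \<times> dir" where
  "write_delta p i =
     (if p = 0 \<or> 5 < p \<or> length (pass_suffix p) \<le> i then (1, 0, Stay)
      else if i + 1 < length (pass_suffix p) then (write_st p (i + 1), pass_suffix p ! i, Rgt)
      else (home_st p, pass_suffix p ! i, Lft))"

definition delta :: "nat \<Rightarrow> nat \<Rightarrow> nat \<times> nat \<times> dir" where
  "delta q a =
     (if q = 0 then pass_delta 0 6 a
      else if q < 60 then pass_delta (q div 10) (q mod 10) a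
      else if 100 \<le> q then write_delta ((q - 100) div 10) ((q - 100) mod 10)
      else (1, 0, Stay))"

definition reduction_tm :: tm where
  "reduction_tm = \<lparr>tm_states = 200, tm_syms = 11, tm_delta = delta\<rparr>"

lemma tm_delta_reduction_tm [simp]: "tm_delta reduction_tm = delta"
  by (simp add: reduction_tm_def)

lemma length_pass_suffix: "length (pass_suffix p) \<le> 8"
  using length_bin_le[of "counter_init p"]
  by (auto simp: pass_suffix_def separator_def pass_counter_def counter_init_def)

lemma set_pass_suffix: "set (pass_suffix p) \<subseteq> {1..7}"
  using set_bin[of "counter_init p"]
  by (auto simp: pass_suffix_def separator_def pass_counter_def)

lemma reduction_tm_wf: "tm_wf reduction_tm"
proof -
  have pass_bounds: "fst (pass_delta p r a) < 200 \<and> fst (snd (pass_delta p r a)) < 11"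
    if "p \<le> 5" "a < 11" for p r a
    using that
    by (simp add: pass_delta_def scan_st_def seek_end_st_def inc_st_def carry_st_def append_st_def
        return_st_def to_end_st_def home_st_def write_st_def home_exit_def unmark_boundary_def)
  have write_bounds: "fst (write_delta p i) < 200 \<and> fst (snd (write_delta p i)) < 11" for p i
  proof (cases "p = 0 \<or> 5 < p \<or> length (pass_suffix p) \<le> i")
    case False
    then have "pass_suffix p ! i \<in> {1..7}"
      using set_pass_suffix nth_mem by (metis not_le subsetD)
    then show ?thesis
      using False length_pass_suffix[of p]
      by (auto simp: write_delta_def write_st_def home_st_def)
  qed (auto simp: write_delta_def)
  show ?thesis
    unfolding tm_wf_def reduction_tm_def
    using pass_bounds write_bounds by (auto simp: delta_def)
qed

lemma delta_write_st: "i < 10 \<Longrightarrow> delta (write_st p i) a = write_delta p i"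
  by (simp add: delta_def write_st_def)

lemma to_end_st_not_halting [simp]: "to_end_st p \<noteq> Suc 0"
  by (simp add: to_end_st_def)

lemma delta_to_end_st: "p \<le> 5 \<Longrightarrow> delta (to_end_st p) a = pass_delta p 6 a"
  by (simp add: delta_def to_end_st_def)

lemma pass_suffix_not_Nil: "pass_suffix p \<noteq> []"
  by (simp add: pass_suffix_def separator_def)

lemma last_pass_suffix: "last (pass_suffix p) \<in> {1, 2, 3}"
  using set_bin[of "counter_init p"] last_in_set[OF bin_not_Nil, of "counter_init p"]
  by (auto simp: pass_suffix_def pass_counter_def separator_def)

lemma pass_prefix_Suc:
  "1 \<le> p \<Longrightarrow> pass_prefix (Suc p) m = pass_prefix p m @ bin (counter_init p + m) @ separator (Suc p)"
  by (cases p) auto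

lemma pass_prefix_Cons: "1 \<le> p \<Longrightarrow> \<exists>pre. pass_prefix p m = 7 # pre"
proof (induction p rule: dec_induct)
  case base
  then show ?case by (simp add: separator_def)
next
  case (step p)
  then show ?case by (auto simp: pass_prefix_Suc)
qed

lemma set_pass_prefix: "set (pass_prefix p m) \<subseteq> {1..7}"
proof (induction p m rule: pass_prefix.induct)
  case (3 p m)
  then show ?case
    using set_bin[of "counter_init (Suc p) + m"] by (auto simp: separator_def)
qed (auto simp: separator_def)

lemma last_pass_prefix: "1 \<le> p \<Longrightarrow> last (pass_prefix p m) \<in> {3, 5, 6}"
  by (induction p rule: dec_induct) (auto simp: pass_prefix_Suc separator_def)

lemma length_pass_prefix: "length (pass_prefix p m) \<le> p * (m + 6)"
proof (induction p m rule: pass_prefix.induct)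
  case (3 p m)
  then show ?case
    using length_bin_le[of "counter_init (Suc p) + m"] by (auto simp: separator_def counter_init_def)
qed (auto simp: separator_def)

lemma length_pass_tape: "p \<le> 5 \<Longrightarrow> length (pass_prefix p m @ pass_counter p) \<le> 5 * m + 33"
  using length_pass_prefix[of p m] length_bin_le[of "counter_init p"] mult_le_mono1[of p 5 "m + 6"]
  by (auto simp: pass_counter_def counter_init_def)

lemma map_unmark_boundary_id: "p \<noteq> 5 \<or> 7 \<notin> set xs \<Longrightarrow> map (unmark_boundary p) xs = xs"
  by (induction xs) (auto simp: unmark_boundary_def)

lemma map_unmark_pass_prefix_5:
  "map (unmark_boundary 5) (pass_prefix 5 m) = enc_slp (neg_square_instrs m)"
proof -
  have "pass_prefix 5 m =
      [7, 1, 3, 1, 3, 6] @ bin m @ [3] @ bin m @ [3, 5] @ bin (1 + m) @ [3] @ bin (2 + m) @ [3]"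
    by (simp add: numeral_eq_Suc separator_def counter_init_def)
  moreover have "7 \<notin> set (bin n)" for n
    using set_bin[of n] by auto
  ultimately show ?thesis
    by (simp add: map_unmark_boundary_id unmark_boundary_def neg_square_instrs_def enc_instr_Cons
        bin_small ac_simps)
qed

context
  fixes p :: nat
  assumes pass_range: "1 \<le> p" "p \<le> 5"
begin

lemma delta_pass_states:
  "delta (scan_st p) a = pass_delta p 0 a"
  "delta (seek_end_st p) a = pass_delta p 1 a"
  "delta (inc_st p) a = pass_delta p 2 a"
  "delta (carry_st p) a = pass_delta p 3 a"
  "delta (append_st p) a = pass_delta p 4 a"
  "delta (return_st p) a = pass_delta p 5 a"
  "delta (home_st p) a = pass_delta p 7 a"
proof -
  have "delta (10 * p + r) a = pass_delta p r a" if "r < 10" for r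
    using pass_range that by (simp add: delta_def)
  from this[of 0] this[of 1] this[of 2] this[of 3] this[of 4] this[of 5] this[of 7] show
    "delta (scan_st p) a = pass_delta p 0 a"
    "delta (seek_end_st p) a = pass_delta p 1 a"
    "delta (inc_st p) a = pass_delta p 2 a"
    "delta (carry_st p) a = pass_delta p 3 a"
    "delta (append_st p) a = pass_delta p 4 a"
    "delta (return_st p) a = pass_delta p 5 a"
    "delta (home_st p) a = pass_delta p 7 a"
    by (simp_all add: scan_st_def seek_end_st_def inc_st_def carry_st_def append_st_def
        return_st_def home_st_def)
qed

lemma pass_states_not_halting [simp]:
  "scan_st p \<noteq> Suc 0" "seek_end_st p \<noteq> Suc 0" "inc_st p \<noteq> Suc 0" "carry_st p \<noteq> Suc 0"
  "append_st p \<noteq> Suc 0" "return_st p \<noteq> Suc 0" "home_st p \<noteq> Suc 0"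
  "write_st p i \<noteq> Suc 0"
  using pass_range
  by (simp_all add: scan_st_def seek_end_st_def inc_st_def carry_st_def append_st_def
      return_st_def home_st_def write_st_def)

lemma increment_carry:
  assumes bin_c: "bin c = pr @ 1 # replicate k 2" and bin_Suc: "bin (c + 1) = pr @ 2 # replicate k 1"
  shows "reaches reduction_tm (inc_st p, tape_of (X @ bin c), int (length X + length (bin c)) - 1)
      (return_st p, tape_of (X @ bin (c + 1)), int (length X + length pr) - 1) (k + 1)"
proof -
  have carry: "reaches reduction_tm (inc_st p, tape_of (X @ bin c), int (length X + length (bin c)) - 1)
      (inc_st p, tape_of ((X @ pr) @ 1 # replicate k 1), int (length (X @ pr))) k"
    using walk_left[of "inc_st p" "replicate k 2" reduction_tm "\<lambda>_. 1" "X @ pr @ [1]" "[]"]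
    by (simp add: bin_c delta_pass_states pass_delta_def ac_simps)
  have stop: "reaches reduction_tm (inc_st p, tape_of ((X @ pr) @ 1 # replicate k 1), int (length (X @ pr)))
      (return_st p, tape_of (X @ bin (c + 1)), int (length X + length pr) - 1) 1"
    using step_at[of "inc_st p" reduction_tm 1 "return_st p" 2 Lft "X @ pr" "replicate k 1"]
    by (simp add: bin_Suc[simplified] delta_pass_states pass_delta_def ac_simps)
  from reaches_trans[OF carry stop] show ?thesis .
qed

lemma increment_overflow:
  assumes bin_c: "bin c = replicate (Suc k) 2" and bin_Suc: "bin (c + 1) = 2 # replicate (Suc k) 1"
    and X: "X = X' @ [d]" "d \<notin> {0, 1, 2}"
  shows "reaches reduction_tm (inc_st p, tape_of (X @ bin c), int (length X + length (bin c)) - 1)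
      (return_st p, tape_of (X @ bin (c + 1)), int (length X + Suc k) - 1) (2 * k + 4)"
proof -
  have carry: "reaches reduction_tm (inc_st p, tape_of (X @ bin c), int (length X + length (bin c)) - 1)
      (inc_st p, tape_of (X' @ d # replicate (Suc k) 1), int (length X')) (Suc k)"
    using walk_left[of "inc_st p" "replicate (Suc k) 2" reduction_tm "\<lambda>_. 1" X "[]"]
    by (simp add: X bin_c delta_pass_states pass_delta_def ac_simps del: replicate_Suc)
  have overflow: "reaches reduction_tm (inc_st p, tape_of (X' @ d # replicate (Suc k) 1), int (length X'))
      (carry_st p, tape_of (X @ 1 # replicate k 1), int (length X)) 1"
    using step_at[of "inc_st p" reduction_tm d "carry_st p" d Rgt X' "replicate (Suc k) 1"] X
    by (simp add: delta_pass_states pass_delta_def ac_simps)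
  have lead: "reaches reduction_tm (carry_st p, tape_of (X @ 1 # replicate k 1), int (length X))
      (append_st p, tape_of ((X @ [2]) @ replicate k 1 @ []), int (length (X @ [2]))) 1"
    using step_at[of "carry_st p" reduction_tm 1 "append_st p" 2 Rgt X "replicate k 1"]
    by (simp add: delta_pass_states pass_delta_def ac_simps)
  have to_end: "reaches reduction_tm
      (append_st p, tape_of ((X @ [2]) @ replicate k 1 @ []), int (length (X @ [2])))
      (append_st p, tape_of (X @ 2 # replicate k 1), int (length (X @ 2 # replicate k 1))) k"
    using walk_right[of "append_st p" "replicate k 1" reduction_tm id "X @ [2]" "[]"]
    by (simp add: delta_pass_states pass_delta_def ac_simps)
  have last_digit: "reaches reduction_tm
      (append_st p, tape_of (X @ 2 # replicate k 1), int (length (X @ 2 # replicate k 1)))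
      (return_st p, tape_of (X @ bin (c + 1)), int (length X + Suc k) - 1) 1"
    using step_at_end[of "append_st p" reduction_tm "return_st p" 1 Lft "X @ 2 # replicate k 1"]
    by (simp add: bin_Suc[simplified] delta_pass_states pass_delta_def ac_simps replicate_append_same)
  from reaches_trans[OF reaches_trans[OF reaches_trans[OF reaches_trans[OF carry overflow] lead]
        to_end] last_digit]
  show ?thesis
    by (rule reaches_mono) simp
qed

lemma increment:
  assumes "X \<noteq> []" "last X \<notin> {0, 1, 2}"
  shows "\<exists>L R. bin (c + 1) = L @ R \<and>
    reaches reduction_tm (inc_st p, tape_of (X @ bin c), int (length X + length (bin c)) - 1)
      (return_st p, tape_of (X @ bin (c + 1)), int (length X + length L) - 1) (2 * length (bin c) + 4)"
  using bin_Suc_cases[of c]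
proof (elim disjE exE conjE)
  fix pr k
  assume bin_c: "bin c = pr @ 1 # replicate k 2" and bin_Suc: "bin (c + 1) = pr @ 2 # replicate k 1"
  have "reaches reduction_tm (inc_st p, tape_of (X @ bin c), int (length X + length (bin c)) - 1)
      (return_st p, tape_of (X @ bin (c + 1)), int (length X + length pr) - 1) (2 * length (bin c) + 4)"
    using increment_carry[OF bin_c bin_Suc] by (rule reaches_mono) (simp add: bin_c)
  with bin_Suc show ?thesis
    by blast
next
  fix k
  assume bin_c: "bin c = replicate (Suc k) 2" and bin_Suc: "bin (c + 1) = 2 # replicate (Suc k) 1"
  obtain X' d where X: "X = X' @ [d]" "d \<notin> {0, 1, 2}"
    using assms by (metis append_butlast_last_id)
  from increment_overflow[OF bin_c bin_Suc X]
  have "reaches reduction_tm (inc_st p, tape_of (X @ bin c), int (length X + length (bin c)) - 1)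
      (return_st p, tape_of (X @ bin (c + 1)), int (length X + Suc k) - 1) (2 * length (bin c) + 4)"
    by (rule reaches_mono) (simp add: bin_c)
  with bin_Suc show ?thesis
    by (intro exI[of _ "2 # replicate k 1"] exI[of _ "[1]"]) (simp add: replicate_append_same)
qed

lemma seek_counter:
  assumes "a \<in> {4, 5, 6}" "0 \<notin> set B"
  shows "reaches reduction_tm (scan_st p, tape_of (u @ a # B), int (length u))
      (inc_st p, tape_of ((u @ [a + 4]) @ B), int (length u + length B)) (length B + 2)"
proof -
  have mark: "reaches reduction_tm (scan_st p, tape_of (u @ a # B), int (length u))
      (seek_end_st p, tape_of ((u @ [a + 4]) @ B @ []), int (length (u @ [a + 4]))) 1"
    using step_at[of "scan_st p" reduction_tm a "seek_end_st p" "a + 4" Rgt u B] assms(1)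
    by (auto simp: delta_pass_states pass_delta_def ac_simps)
  have "\<forall>x\<in>set B. tm_delta reduction_tm (seek_end_st p) x = (seek_end_st p, id x, Rgt)"
    using assms(2) by (auto simp: delta_pass_states pass_delta_def intro!: gr0I)
  then have seek: "reaches reduction_tm
      (seek_end_st p, tape_of ((u @ [a + 4]) @ B @ []), int (length (u @ [a + 4])))
      (seek_end_st p, tape_of ((u @ [a + 4]) @ B), int (length ((u @ [a + 4]) @ B))) (length B)"
    using walk_right[of "seek_end_st p" B reduction_tm id "u @ [a + 4]" "[]"] by simp
  have turn: "reaches reduction_tm (seek_end_st p, tape_of ((u @ [a + 4]) @ B), int (length ((u @ [a + 4]) @ B)))
      (inc_st p, tape_of ((u @ [a + 4]) @ B), int (length u + length B)) 1"
    using step_at_end_blank[of "seek_end_st p" reduction_tm "inc_st p" Lft "(u @ [a + 4]) @ B"]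
    by (simp add: delta_pass_states pass_delta_def ac_simps)
  from reaches_trans[OF reaches_trans[OF mark seek] turn] show ?thesis
    by (simp add: ac_simps)
qed

lemma return_to_mark:
  assumes "a \<in> {4, 5, 6}" "set B \<inter> {8, 9, 10} = {}"
  shows "reaches reduction_tm (return_st p, tape_of ((u @ [a + 4]) @ B @ C), int (length u + length B))
      (scan_st p, tape_of ((u @ [a]) @ B @ C), int (length u + 1)) (length B + 1)"
proof -
  have "\<forall>x\<in>set B. tm_delta reduction_tm (return_st p) x = (return_st p, id x, Lft)"
    using assms(2) by (auto simp: delta_pass_states pass_delta_def)
  then have "reaches reduction_tm (return_st p, tape_of ((u @ [a + 4]) @ B @ C), int (length u + length B))
      (return_st p, tape_of (u @ (a + 4) # B @ C), int (length u)) (length B)"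
    using walk_left[of "return_st p" B reduction_tm id "u @ [a + 4]" C] by (simp add: ac_simps)
  moreover have "reaches reduction_tm (return_st p, tape_of (u @ (a + 4) # B @ C), int (length u))
      (scan_st p, tape_of ((u @ [a]) @ B @ C), int (length u + 1)) 1"
    using step_at[of "return_st p" reduction_tm "a + 4" "scan_st p" a Rgt u "B @ C"] assms(1)
    by (auto simp: delta_pass_states pass_delta_def ac_simps)
  ultimately show ?thesis
    by (rule reaches_trans)
qed

lemma count_op_sym:
  assumes a: "a \<in> {4, 5, 6}" and v: "set v \<subseteq> {1..6}"
    and pre: "pre \<noteq> []" "set pre \<subseteq> {1..7}" "last pre \<notin> {1, 2}"
    and K: "length u + 1 + length v + length pre + length (bin (c + 1)) \<le> K"
  shows "reaches reduction_tm (scan_st p, tape_of (u @ a # v @ pre @ bin c), int (length u))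
      (scan_st p, tape_of ((u @ [a]) @ v @ pre @ bin (c + 1)), int (length (u @ [a]))) (4 * K + 8)"
proof -
  let ?X = "(u @ [a + 4]) @ v @ pre"
  have symbols: "set (v @ pre @ bin n) \<subseteq> {1..7}" for n
    using v pre set_bin[of n] by auto
  then have "reaches reduction_tm (scan_st p, tape_of (u @ a # v @ pre @ bin c), int (length u))
      (inc_st p, tape_of (?X @ bin c), int (length ?X + length (bin c)) - 1) (length (v @ pre @ bin c) + 2)"
    using seek_counter[of a "v @ pre @ bin c" u] a by (fastforce simp: ac_simps)
  moreover have "last pre \<in> {1..7}"
    using pre last_in_set[of pre] by blast
  then obtain L R where LR: "bin (c + 1) = L @ R" and "reaches reduction_tm
      (inc_st p, tape_of (?X @ bin c), int (length ?X + length (bin c)) - 1)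
      (return_st p, tape_of (?X @ bin (c + 1)), int (length ?X + length L) - 1) (2 * length (bin c) + 4)"
    using increment[of ?X c] pre by auto
  moreover have "reaches reduction_tm
      (return_st p, tape_of (?X @ bin (c + 1)), int (length ?X + length L) - 1)
      (scan_st p, tape_of ((u @ [a]) @ v @ pre @ bin (c + 1)), int (length (u @ [a]))) (length (v @ pre @ L) + 1)"
    using return_to_mark[of a "v @ pre @ L" u R] a symbols[of "c + 1"] LR
    by (fastforce simp: LR[simplified] ac_simps)
  moreover have "length (bin c) \<le> length (bin (c + 1))" "length L \<le> length (bin (c + 1))"
    using length_bin_mono[of c "c + 1"] LR by simp_all
  ultimately show ?thesis
    using K by (fastforce dest: reaches_trans elim: reaches_mono)
qed

lemma scan_input:
  assumes "set v \<subseteq> {1..6}" "pre \<noteq> []" "set pre \<subseteq> {1..7}" "last pre \<notin> {1, 2}"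
    and "length u + length v + length pre + length (bin (c + count_ops v)) \<le> K"
  shows "reaches reduction_tm (scan_st p, tape_of (u @ v @ pre @ bin c), int (length u))
      (scan_st p, tape_of (u @ v @ pre @ bin (c + count_ops v)), int (length u + length v))
      (length v * (4 * K + 8))"
  using assms(1,5)
proof (induction v arbitrary: u c)
  case Nil
  then show ?case by (simp add: count_ops_def reaches_refl)
next
  case (Cons a v)
  show ?case
  proof (cases "a \<in> {4, 5, 6}")
    case True
    then have count: "c + count_ops (a # v) = c + 1 + count_ops v"
      by (simp add: count_ops_def)
    have "length (bin (c + 1)) \<le> length (bin (c + count_ops (a # v)))"
      using count length_bin_mono by simp
    then have "reaches reduction_tm (scan_st p, tape_of (u @ a # v @ pre @ bin c), int (length u))
        (scan_st p, tape_of ((u @ [a]) @ v @ pre @ bin (c + 1)), int (length (u @ [a]))) (4 * K + 8)"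
      using count_op_sym[of a v pre u c K] True Cons.prems assms(2-4) by simp
    moreover have "reaches reduction_tm
        (scan_st p, tape_of ((u @ [a]) @ v @ pre @ bin (c + 1)), int (length (u @ [a])))
        (scan_st p, tape_of ((u @ [a]) @ v @ pre @ bin (c + 1 + count_ops v)),
          int (length (u @ [a]) + length v))
        (length v * (4 * K + 8))"
      using Cons.IH[of "u @ [a]" "c + 1"] Cons.prems count by simp
    ultimately show ?thesis
      using count by (auto dest: reaches_trans)
  next
    case False
    then have count: "count_ops (a # v) = count_ops v"
      by (simp add: count_ops_def)
    have "reaches reduction_tm (scan_st p, tape_of (u @ a # v @ pre @ bin c), int (length u))
        (scan_st p, tape_of ((u @ [a]) @ v @ pre @ bin c), int (length (u @ [a]))) 1"
      using step_at[of "scan_st p" reduction_tm a "scan_st p" a Rgt u "v @ pre @ bin c"] False Cons.prems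
      by (auto simp: delta_pass_states pass_delta_def ac_simps)
    moreover have "reaches reduction_tm
        (scan_st p, tape_of ((u @ [a]) @ v @ pre @ bin c), int (length (u @ [a])))
        (scan_st p, tape_of ((u @ [a]) @ v @ pre @ bin (c + count_ops v)), int (length (u @ [a]) + length v))
        (length v * (4 * K + 8))"
      using Cons.IH[of "u @ [a]" c] Cons.prems count by simp
    ultimately show ?thesis
      using count reaches_trans by (fastforce elim: reaches_mono)
  qed
qed

lemma count_pass:
  assumes "set w \<subseteq> {1..6}" "set pre \<subseteq> {1..7}" "last (7 # pre) \<notin> {1, 2}"
    and "length w + 1 + length pre + length (bin (c + count_ops w)) \<le> K"
  shows "reaches reduction_tm (scan_st p, tape_of (w @ 7 # pre @ bin c), 0)
      (to_end_st p, tape_of ((w @ [7]) @ pre @ bin (c + count_ops w)), int (length (w @ [7])))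
      (length w * (4 * K + 8) + 1)"
proof -
  have "reaches reduction_tm (scan_st p, tape_of (w @ 7 # pre @ bin c), 0)
      (scan_st p, tape_of (w @ 7 # pre @ bin (c + count_ops w)), int (length w)) (length w * (4 * K + 8))"
    using scan_input[of w "7 # pre" "[]" c K] assms by simp
  moreover have "reaches reduction_tm (scan_st p, tape_of (w @ 7 # pre @ bin (c + count_ops w)), int (length w))
      (to_end_st p, tape_of ((w @ [7]) @ pre @ bin (c + count_ops w)), int (length (w @ [7]))) 1"
    using step_at[of "scan_st p" reduction_tm 7 "to_end_st p" 7 Rgt w "pre @ bin (c + count_ops w)"]
    by (simp add: delta_pass_states pass_delta_def ac_simps)
  ultimately show ?thesis
    by (rule reaches_trans)
qed

lemma write_suffix:
  "reaches reduction_tm (write_st p 0, tape_of Z, int (length Z))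
    (home_st p, tape_of (Z @ pass_suffix p), int (length (Z @ pass_suffix p)) - 2) (length (pass_suffix p))"
proof -
  let ?S = "pass_suffix p"
  have delta_write: "delta (write_st p i) 0 =
      (if i + 1 < length ?S then (write_st p (i + 1), ?S ! i, Rgt) else (home_st p, ?S ! i, Lft))"
    if "i < length ?S" for i
  proof -
    have "i < 10"
      using that length_pass_suffix[of p] by simp
    then show ?thesis
      using that pass_range by (simp add: delta_write_st write_delta_def)
  qed
  have writing: "reaches reduction_tm (write_st p 0, tape_of Z, int (length Z))
      (write_st p i, tape_of (Z @ take i ?S), int (length (Z @ take i ?S))) i" if "i < length ?S" for i
    using that
  proof (induction i)
    case 0
    then show ?case by (simp add: reaches_refl)
  next
    case (Suc i)
    then have "reaches reduction_tm (write_st p i, tape_of (Z @ take i ?S), int (length (Z @ take i ?S)))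
        (write_st p (i + 1), tape_of ((Z @ take i ?S) @ [?S ! i]), int (length (Z @ take i ?S)) + move Rgt) 1"
      by (intro step_at_end) (simp_all add: delta_write)
    from reaches_trans[OF Suc.IH this] Suc.prems show ?case
      by (simp add: take_Suc_conv_app_nth ac_simps)
  qed
  obtain l where l: "length ?S = Suc l"
    using pass_suffix_not_Nil by (cases "length ?S") auto
  have full: "take l ?S @ [?S ! l] = ?S"
    using l by (simp add: take_Suc_conv_app_nth[symmetric])
  have "reaches reduction_tm (write_st p l, tape_of (Z @ take l ?S), int (length (Z @ take l ?S)))
      (home_st p, tape_of ((Z @ take l ?S) @ [?S ! l]), int (length (Z @ take l ?S)) + move Lft) 1"
    by (intro step_at_end) (use l in \<open>simp_all add: delta_write\<close>)
  from reaches_trans[OF writing[of l] this] l show ?thesis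
    by (simp add: full l)
qed

lemma go_home:
  assumes "0 \<notin> set Y"
  shows "reaches reduction_tm (home_st p, tape_of (Y @ [y]), int (length Y) - 1)
      (home_exit p, tape_of (map (unmark_boundary p) Y @ [y]), 0) (length Y + 1)"
proof -
  have "reaches reduction_tm (home_st p, tape_of (Y @ [y]), int (length Y) - 1)
      (home_st p, tape_of (map (unmark_boundary p) Y @ [y]), - 1) (length Y)"
  proof -
    have "\<forall>a\<in>set Y. tm_delta reduction_tm (home_st p) a = (home_st p, unmark_boundary p a, Lft)"
      using assms by (auto simp: delta_pass_states pass_delta_def intro!: gr0I)
    then show ?thesis
      using walk_left[of "home_st p" Y reduction_tm "unmark_boundary p" "[]" "[y]"] by simp
  qed
  moreover have "reaches reduction_tm (home_st p, tape_of (map (unmark_boundary p) Y @ [y]), - 1)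
      (home_exit p, tape_of (map (unmark_boundary p) Y @ [y]), 0) 1"
    using step_before_start[of "home_st p" reduction_tm "home_exit p" Rgt]
    by (simp add: delta_pass_states pass_delta_def)
  ultimately show ?thesis
    using reaches_trans by fastforce
qed

end

lemma finish_pass:
  assumes p: "p \<le> 4" and nonblank: "0 \<notin> set (A @ B)"
  shows "reaches reduction_tm (to_end_st p, tape_of (A @ B), int (length A))
    (home_exit (p + 1), tape_of (map (unmark_boundary (p + 1)) (A @ B @ pass_suffix (p + 1))), 0)
    (length B + 2 * length (A @ B @ pass_suffix (p + 1)) + 1)"
proof -
  let ?S = "pass_suffix (p + 1)"
  have "\<forall>a\<in>set B. tm_delta reduction_tm (to_end_st p) a = (to_end_st p, id a, Rgt)"
    using nonblank p by (auto simp: delta_to_end_st pass_delta_def intro!: gr0I)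
  then have to_end: "reaches reduction_tm (to_end_st p, tape_of (A @ B), int (length A))
      (to_end_st p, tape_of (A @ B), int (length (A @ B))) (length B)"
    using walk_right[of "to_end_st p" B reduction_tm id A "[]"] by simp
  have turn: "reaches reduction_tm (to_end_st p, tape_of (A @ B), int (length (A @ B)))
      (write_st (p + 1) 0, tape_of (A @ B), int (length (A @ B))) 1"
    using step_at_end_blank[of "to_end_st p" reduction_tm "write_st (p + 1) 0" Stay "A @ B"] p
    by (simp add: delta_to_end_st pass_delta_def)
  obtain S' s where S: "?S = S' @ [s]" and "s \<in> {1, 2, 3}"
    using append_butlast_last_id[OF pass_suffix_not_Nil] last_pass_suffix by metis
  have "0 \<notin> set (A @ B @ S')"
    using nonblank set_pass_suffix[of "p + 1"] S by auto
  then have "reaches reduction_tm (home_st (p + 1), tape_of ((A @ B @ S') @ [s]), int (length (A @ B @ S')) - 1)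
      (home_exit (p + 1), tape_of (map (unmark_boundary (p + 1)) (A @ B @ S') @ [s]), 0)
      (length (A @ B @ S') + 1)"
    using p by (intro go_home) simp_all
  moreover have "map (unmark_boundary (p + 1)) (A @ B @ ?S) = map (unmark_boundary (p + 1)) (A @ B @ S') @ [s]"
    using S \<open>s \<in> {1, 2, 3}\<close> by (auto simp: unmark_boundary_def)
  ultimately have home: "reaches reduction_tm
      (home_st (p + 1), tape_of ((A @ B) @ ?S), int (length ((A @ B) @ ?S)) - 2)
      (home_exit (p + 1), tape_of (map (unmark_boundary (p + 1)) (A @ B @ ?S)), 0) (length (A @ B @ ?S))"
    using S by (simp add: ac_simps)
  have "1 \<le> p + 1" "p + 1 \<le> 5"
    using p by simp_all
  from reaches_trans[OF reaches_trans[OF reaches_trans[OF to_end turn] write_suffix[OF this]] home]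
  show ?thesis
    by (rule reaches_mono) simp
qed

section \<open>Running time\<close>

lemma one_pass:
  assumes w: "set w \<subseteq> {1..6}" and q: "1 \<le> q" "q \<le> 4"
  shows "reaches reduction_tm
    (scan_st q, tape_of (w @ pass_prefix q (count_ops w) @ bin (counter_init q)), 0)
    (home_exit (Suc q), tape_of (map (unmark_boundary (Suc q))
      (w @ pass_prefix (Suc q) (count_ops w) @ pass_counter (Suc q))), 0)
    ((length w + 1) * (24 * length w + 140))"
proof -
  let ?m = "count_ops w" and ?n = "length w" and ?c = "counter_init q"
  let ?K = "6 * ?n + 33"
  obtain pre where pre: "pass_prefix q ?m = 7 # pre"
    using pass_prefix_Cons q by blast
  have tape_Suc: "pass_prefix (Suc q) ?m @ pass_counter (Suc q)
      = pass_prefix q ?m @ bin (?c + ?m) @ pass_suffix (Suc q)"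
    using q by (simp add: pass_prefix_Suc pass_suffix_def)
  have "length (pass_prefix (Suc q) ?m @ pass_counter (Suc q)) \<le> 5 * ?m + 33"
    using q by (intro length_pass_tape) simp
  then have tape_bound: "?n + length (pass_prefix q ?m @ bin (?c + ?m) @ pass_suffix (Suc q)) \<le> ?K"
    using count_ops_le_length[of w] tape_Suc by simp
  have count: "reaches reduction_tm (scan_st q, tape_of (w @ 7 # pre @ bin ?c), 0)
      (to_end_st q, tape_of ((w @ [7]) @ pre @ bin (?c + ?m)), int (length (w @ [7])))
      (?n * (4 * ?K + 8) + 1)"
    using w set_pass_prefix[of q ?m] last_pass_prefix[of q ?m] tape_bound pre q
    by (intro count_pass) auto
  have finish: "reaches reduction_tm
      (to_end_st q, tape_of ((w @ [7]) @ pre @ bin (?c + ?m)), int (length (w @ [7])))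
      (home_exit (Suc q), tape_of (map (unmark_boundary (Suc q))
        ((w @ [7]) @ (pre @ bin (?c + ?m)) @ pass_suffix (Suc q))), 0)
      (length (pre @ bin (?c + ?m))
        + 2 * length ((w @ [7]) @ (pre @ bin (?c + ?m)) @ pass_suffix (Suc q)) + 1)"
    using finish_pass[of q "w @ [7]" "pre @ bin (?c + ?m)"] q w
      set_pass_prefix[of q ?m] pre set_bin[of "?c + ?m"] by fastforce
  have "(w @ [7]) @ (pre @ bin (?c + ?m)) @ pass_suffix (Suc q)
      = w @ pass_prefix (Suc q) ?m @ pass_counter (Suc q)"
    using pre tape_Suc by simp
  moreover have "(?n * (4 * ?K + 8) + 1) + (length (pre @ bin (?c + ?m))
      + 2 * length ((w @ [7]) @ (pre @ bin (?c + ?m)) @ pass_suffix (Suc q)) + 1)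
      \<le> (?n + 1) * (24 * ?n + 140)"
    using tape_bound pre by (simp add: algebra_simps)
  ultimately show ?thesis
    using reaches_trans[OF count finish] pre by (auto elim: reaches_mono)
qed

lemma run_passes:
  assumes w: "set w \<subseteq> {1..6}" and q: "1 \<le> q" "q \<le> 5"
  shows "reaches reduction_tm (tm_init w)
    (home_exit q, tape_of (map (unmark_boundary q) (w @ pass_prefix q (count_ops w) @ pass_counter q)), 0)
    (q * ((length w + 1) * (24 * length w + 140)))"
  using q
proof (induction q rule: dec_induct)
  case base
  have "reaches reduction_tm (tm_init w)
      (home_exit 1, tape_of (map (unmark_boundary 1) (w @ pass_prefix 1 (count_ops w) @ pass_counter 1)), 0)
      (length w + 2 * length (w @ pass_suffix 1) + 1)"
    using finish_pass[of 0 "[]" w] w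
    by (fastforce simp: tm_init_eq to_end_st_def pass_suffix_def pass_counter_def counter_init_def)
  then show ?case
    by (rule reaches_mono) (use length_pass_suffix[of 1] in \<open>simp add: distrib_left distrib_right\<close>)
next
  case (step q)
  then have "reaches reduction_tm (tm_init w)
      (scan_st q, tape_of (w @ pass_prefix q (count_ops w) @ bin (counter_init q)), 0)
      (q * ((length w + 1) * (24 * length w + 140)))"
    using map_unmark_boundary_id[of q] by (simp add: home_exit_def pass_counter_def)
  from reaches_trans[OF this one_pass[OF w]] step show ?case
    by (simp add: add.commute)
qed

theorem reduction_tm_computes:
  assumes "w \<in> words"
  shows "computes_within reduction_tm w (reduction w) (700 * (length w + 1) ^ 2)"
proof (rule computes_within_if_reaches)
  have w: "set w \<subseteq> {1..6}"
    using assms by (simp add: words_def sigma_def)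
  then have "7 \<notin> set w"
    by auto
  then have "map (unmark_boundary 5) (w @ pass_prefix 5 (count_ops w) @ pass_counter 5) = reduction w"
    by (simp add: map_unmark_boundary_id map_unmark_pass_prefix_5 pass_counter_def reduction_def)
  moreover have "5 * ((length w + 1) * (24 * length w + 140)) \<le> 700 * (length w + 1) ^ 2"
    by (simp add: power2_eq_square distrib_left distrib_right)
  ultimately show "reaches reduction_tm (tm_init w) (1, tape_of (reduction w), 0) (700 * (length w + 1) ^ 2)"
    using run_passes[OF w, of 5] by (auto simp: home_exit_def elim: reaches_mono)
  show "0 \<notin> set (reduction w)"
    using w set_enc_slp by (force simp: reduction_def)
qed

theorem mainTheorem14:
  shows "poly_reduces EquSLP TwoSoSSLP"
  unfolding poly_reduces_def
  using reduction_tm_wf reduction_tm_computes reduction_correct by blast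

end
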